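(* Let $G$ be a profinite group such that the set $FC(G)=\{g\in G : g \text{ has only finitely many conjugates in } G\}$ is dense in $G$. Then: (1) if $g\in FC(G)$, then the closed subgroup $[G,g]$ is finite; (2) if $g\in FC(G)$ is an element of finite order, then the closed subgroup $\langle g^G\rangle$ topologically generated by the conjugacy class of $g$ is finite.
   Context: For subsets $X,Y$ of a profinite group, $[X,Y]$ denotes the closed subgroup topologically generated by all commutators $[x,y]$ with $x\in X$, $y\in Y$; $[G,g]$ means $[G,\{g\}]$. $g^G$ denotes the conjugacy class of $g$ in $G$. *)

theory Defs
  imports "HOL-Analysis.Analysis" "HOL-Algebra.Algebra"
begin

definition topological_group :: "('a, 'b) monoid_scheme \<Rightarrow> 'a topology \<Rightarrow> bool" where
  "topological_group G T \<longleftrightarrow>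
     group G \<and> topspace T = carrier G \<and>
     continuous_map (prod_topology T T) T (\<lambda>(x, y). x \<otimes>\<^bsub>G\<^esub> y) \<and>
     continuous_map T T (\<lambda>x. inv\<^bsub>G\<^esub> x)"

definition profinite_group :: "('a, 'b) monoid_scheme \<Rightarrow> 'a topology \<Rightarrow> bool" where
  "profinite_group G T \<longleftrightarrow>
     topological_group G T \<and> compact_space T \<and> Hausdorff_space T \<and>
     (\<forall>x\<in>topspace T. connected_component_of_set T x = {x})"

definition top_generate :: "('a, 'b) monoid_scheme \<Rightarrow> 'a topology \<Rightarrow> 'a set \<Rightarrow> 'a set" where
  "top_generate G T S = \<Inter>{H. subgroup H G \<and> closedin T H \<and> S \<subseteq> H}"

definition grp_commutator :: "('a, 'b) monoid_scheme \<Rightarrow> 'a \<Rightarrow> 'a \<Rightarrow> 'a" where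
  "grp_commutator G x y = inv\<^bsub>G\<^esub> x \<otimes>\<^bsub>G\<^esub> inv\<^bsub>G\<^esub> y \<otimes>\<^bsub>G\<^esub> x \<otimes>\<^bsub>G\<^esub> y"

definition top_commutator :: "('a, 'b) monoid_scheme \<Rightarrow> 'a topology \<Rightarrow> 'a set \<Rightarrow> 'a set \<Rightarrow> 'a set" where
  "top_commutator G T A B = top_generate G T {grp_commutator G x y | x y. x \<in> A \<and> y \<in> B}"

definition conj_class :: "('a, 'b) monoid_scheme \<Rightarrow> 'a \<Rightarrow> 'a set" where
  "conj_class G g = {h \<otimes>\<^bsub>G\<^esub> g \<otimes>\<^bsub>G\<^esub> inv\<^bsub>G\<^esub> h | h. h \<in> carrier G}"

definition FC :: "('a, 'b) monoid_scheme \<Rightarrow> 'a set" where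
  "FC G = {g \<in> carrier G. finite (conj_class G g)}"

end

theory Submission
  imports Defs
begin

text \<open>
  For \<open>g \<in> FC(G)\<close> the continuous map \<open>x \<mapsto> [x, g]\<close> takes only finitely many values, so its
  fibres are open and each value is already attained at some \<open>y \<in> FC(G)\<close>, by density.
  A commutator \<open>[a, b]\<close> of two FC-elements has finite order: the centralizer of \<open>a\<close> and \<open>b\<close> in
  \<open>\<langle>a, b\<rangle>\<close> is central of finite index there, and the transfer into it kills commutators while
  raising central elements to the power of the index.  So the commutators \<open>[x, k]\<close>, \<open>k\<close> conjugate
  to \<open>g\<close>, form a finite conjugation-invariant set of torsion elements; by Dietzmann's lemma it
  generates a finite, hence closed, subgroup, which contains \<open>[G, g]\<close>.  Part (2) is Dietzmann's
  lemma applied to the conjugacy class of \<open>g\<close>.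
\<close>

lemma conj_class_eq_image: "conj_class G g = (\<lambda>h. h \<otimes>\<^bsub>G\<^esub> g \<otimes>\<^bsub>G\<^esub> inv\<^bsub>G\<^esub> h) ` carrier G"
  unfolding conj_class_def by blast

context group
begin

lemma inv_mult_cancel_left: "x \<in> carrier G \<Longrightarrow> y \<in> carrier G \<Longrightarrow> inv x \<otimes> (x \<otimes> y) = y"
  by (simp add: m_assoc[symmetric])

lemma mult_inv_cancel_left: "x \<in> carrier G \<Longrightarrow> y \<in> carrier G \<Longrightarrow> x \<otimes> (inv x \<otimes> y) = y"
  by (simp add: m_assoc[symmetric])

lemma conj_conj:
  "h \<in> carrier G \<Longrightarrow> k \<in> carrier G \<Longrightarrow> x \<in> carrier G \<Longrightarrow>
   h \<otimes> (k \<otimes> x \<otimes> inv k) \<otimes> inv h = (h \<otimes> k) \<otimes> x \<otimes> inv (h \<otimes> k)"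
  by (simp add: m_assoc inv_mult_group)

lemma conj_nat_pow:
  assumes "h \<in> carrier G" "x \<in> carrier G"
  shows "(h \<otimes> x \<otimes> inv h) [^] (n::nat) = h \<otimes> x [^] n \<otimes> inv h"
proof (induct n)
  case 0
  then show ?case using assms by simp
next
  case (Suc n)
  then show ?case using assms by (simp add: m_assoc inv_solve_left')
qed

lemma conj_commutator:
  assumes "h \<in> carrier G" "x \<in> carrier G" "k \<in> carrier G"
  shows "h \<otimes> grp_commutator G x k \<otimes> inv h = grp_commutator G (h \<otimes> x \<otimes> inv h) (h \<otimes> k \<otimes> inv h)"
  using assms by (simp add: grp_commutator_def m_assoc inv_mult_group inv_mult_cancel_left)

lemma mult_inv_commute_if_conj_eq:
  assumes "u \<in> carrier G" "v \<in> carrier G" "s \<in> carrier G"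
    and "inv u \<otimes> s \<otimes> u = inv v \<otimes> s \<otimes> v"
  shows "u \<otimes> inv v \<otimes> s = s \<otimes> (u \<otimes> inv v)"
proof -
  have "u \<otimes> inv v \<otimes> s = u \<otimes> (inv v \<otimes> s \<otimes> v) \<otimes> inv v"
    using assms(1-3) by (simp add: m_assoc)
  also have "\<dots> = u \<otimes> (inv u \<otimes> s \<otimes> u) \<otimes> inv v" by (simp only: assms(4))
  also have "\<dots> = s \<otimes> (u \<otimes> inv v)"
    using assms(1-3) by (simp add: m_assoc mult_inv_cancel_left)
  finally show ?thesis .
qed

lemma mem_conj_class_self: "g \<in> carrier G \<Longrightarrow> g \<in> conj_class G g"
  unfolding conj_class_eq_image by (rule image_eqI[of _ _ \<one>]) simp_all

lemma conj_class_subset_carrier: "g \<in> carrier G \<Longrightarrow> conj_class G g \<subseteq> carrier G"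
  unfolding conj_class_eq_image by auto

lemma conj_mem_conj_class:
  assumes "g \<in> carrier G" "h \<in> carrier G" "k \<in> conj_class G g"
  shows "h \<otimes> k \<otimes> inv h \<in> conj_class G g"
proof -
  obtain h' where h': "h' \<in> carrier G" "k = h' \<otimes> g \<otimes> inv h'"
    using assms(3) unfolding conj_class_eq_image by blast
  then have "h \<otimes> k \<otimes> inv h = (h \<otimes> h') \<otimes> g \<otimes> inv (h \<otimes> h')"
    using assms(1,2) conj_conj by simp
  then show ?thesis
    using assms(2) h'(1) unfolding conj_class_eq_image by (intro image_eqI[of _ _ "h \<otimes> h'"]) auto
qed

lemma conj_class_subset_of_mem:
  "g \<in> carrier G \<Longrightarrow> k \<in> conj_class G g \<Longrightarrow> conj_class G k \<subseteq> conj_class G g"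
  using conj_mem_conj_class unfolding conj_class_eq_image[of G k] by blast

lemma conj_class_inv: "g \<in> carrier G \<Longrightarrow> conj_class G (inv g) = (\<lambda>x. inv x) ` conj_class G g"
  unfolding conj_class_eq_image image_image
  by (intro image_cong) (simp_all add: inv_mult_group m_assoc)

lemma FC_conj_class:
  assumes "g \<in> FC G" "k \<in> conj_class G g"
  shows "k \<in> FC G"
proof -
  have g: "g \<in> carrier G" "finite (conj_class G g)" using assms(1) unfolding FC_def by auto
  have "k \<in> carrier G" using conj_class_subset_carrier[OF g(1)] assms(2) by blast
  moreover have "finite (conj_class G k)"
    using finite_subset[OF conj_class_subset_of_mem[OF g(1) assms(2)] g(2)] .
  ultimately show ?thesis unfolding FC_def by simp
qed

lemma commutators_finite:
  assumes "g \<in> FC G"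
  shows "finite ((\<lambda>x. grp_commutator G x g) ` carrier G)"
proof (rule finite_subset)
  have g: "g \<in> carrier G" using assms unfolding FC_def by blast
  show "(\<lambda>x. grp_commutator G x g) ` carrier G \<subseteq> (\<lambda>u. u \<otimes> g) ` conj_class G (inv g)"
  proof
    fix c assume "c \<in> (\<lambda>x. grp_commutator G x g) ` carrier G"
    then obtain x where x: "x \<in> carrier G" "c = grp_commutator G x g" by blast
    then have "c = (inv x \<otimes> inv g \<otimes> inv (inv x)) \<otimes> g"
      using g by (simp add: grp_commutator_def)
    moreover have "inv x \<otimes> inv g \<otimes> inv (inv x) \<in> conj_class G (inv g)"
      unfolding conj_class_eq_image using x by blast
    ultimately show "c \<in> (\<lambda>u. u \<otimes> g) ` conj_class G (inv g)" by blast
  qed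
  show "finite ((\<lambda>u. u \<otimes> g) ` conj_class G (inv g))"
    using assms g by (simp add: conj_class_inv FC_def)
qed

end

section \<open>Dietzmann's lemma\<close>

definition list_prod :: "('a, 'b) monoid_scheme \<Rightarrow> 'a list \<Rightarrow> 'a" where
  "list_prod G xs = foldr (\<lambda>x y. x \<otimes>\<^bsub>G\<^esub> y) xs \<one>\<^bsub>G\<^esub>"

context group
begin

lemma list_prod_Nil [simp]: "list_prod G [] = \<one>"
  by (simp add: list_prod_def)

lemma list_prod_Cons [simp]: "list_prod G (x # xs) = x \<otimes> list_prod G xs"
  by (simp add: list_prod_def)

lemma list_prod_closed [simp]: "set xs \<subseteq> carrier G \<Longrightarrow> list_prod G xs \<in> carrier G"
  by (induct xs) auto

lemma list_prod_append:
  "set xs \<subseteq> carrier G \<Longrightarrow> set ys \<subseteq> carrier G \<Longrightarrow>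
   list_prod G (xs @ ys) = list_prod G xs \<otimes> list_prod G ys"
  by (induct xs) (auto simp: m_assoc)

lemma list_prod_replicate: "x \<in> carrier G \<Longrightarrow> list_prod G (replicate n x) = x [^] n"
  by (induct n) (auto, metis nat_pow_Suc nat_pow_Suc2)

lemma common_exponent:
  assumes "finite W" "W \<subseteq> carrier G" "\<And>x. x \<in> W \<Longrightarrow> \<exists>n::nat. n > 0 \<and> x [^] n = \<one>"
  obtains N :: nat where "N > 0" "\<And>x. x \<in> W \<Longrightarrow> x [^] N = \<one>"
  using assms
proof (induct W arbitrary: thesis rule: finite_induct)
  case empty
  then show ?case by (metis empty_iff zero_less_one)
next
  case (insert w W)
  obtain N :: nat where N: "N > 0" "\<And>x. x \<in> W \<Longrightarrow> x [^] N = \<one>"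
    using insert by blast
  obtain n :: nat where n: "n > 0" "w [^] n = \<one>"
    using insert.prems(3) by blast
  have "x [^] (N * n) = \<one>" if "x \<in> insert w W" for x
  proof -
    have "x \<in> carrier G" using that insert.prems(2) by blast
    then have "x [^] (N * n) = (x [^] N) [^] n" and "x [^] (N * n) = (x [^] n) [^] N"
      by (simp_all add: nat_pow_pow mult.commute)
    then show ?thesis using that N n by auto
  qed
  then show ?case using insert.prems(1) N(1) n(1) by (metis nat_0_less_mult_iff)
qed

lemma list_prod_collect:
  assumes W: "W \<subseteq> carrier G" "\<And>h x. h \<in> carrier G \<Longrightarrow> x \<in> W \<Longrightarrow> h \<otimes> x \<otimes> inv h \<in> W"
    and t: "t \<in> W"
  shows "set xs \<subseteq> W \<Longrightarrow> \<exists>ys. set ys \<subseteq> W \<and> length ys + count_list xs t = length xs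
            \<and> list_prod G xs = t [^] count_list xs t \<otimes> list_prod G ys"
proof (induct xs)
  case Nil
  then show ?case by (intro exI[of _ "[]"]) simp
next
  case (Cons a xs)
  then obtain ys where ys: "set ys \<subseteq> W" "length ys + count_list xs t = length xs"
     "list_prod G xs = t [^] count_list xs t \<otimes> list_prod G ys" by auto
  define c where "c = count_list xs t"
  have carrier: "t \<in> carrier G" "a \<in> carrier G" "list_prod G ys \<in> carrier G"
    using Cons.prems ys(1) t W(1) by auto
  show ?case
  proof (cases "a = t")
    case True
    then show ?thesis
      using ys carrier
      by (intro exI[of _ ys]) (simp add: c_def[symmetric] m_assoc[symmetric] nat_pow_Suc2[symmetric])
  next
    case False
    \<comment> \<open>\<open>a\<close> is moved past \<open>t [^] c\<close> at the price of being replaced by a conjugate\<close>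
    define a' where "a' = inv (t [^] c) \<otimes> a \<otimes> t [^] c"
    have "a' \<in> W" using W(2)[of "inv (t [^] c)" a] Cons.prems carrier unfolding a'_def by auto
    moreover have "a \<otimes> list_prod G xs = t [^] c \<otimes> (a' \<otimes> list_prod G ys)"
      using ys carrier unfolding a'_def c_def[symmetric] by (simp add: m_assoc[symmetric])
    ultimately show ?thesis
      using ys False by (intro exI[of _ "a' # ys"]) (simp add: c_def)
  qed
qed

lemma list_prod_shorten:
  fixes N :: nat
  assumes W: "W \<subseteq> carrier G" "\<And>h x. h \<in> carrier G \<Longrightarrow> x \<in> W \<Longrightarrow> h \<otimes> x \<otimes> inv h \<in> W"
    "finite W"
    and N: "N > 0" "\<And>t. t \<in> W \<Longrightarrow> t [^] N = \<one>"
  shows "set xs \<subseteq> W \<Longrightarrow>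
    \<exists>ys. set ys \<subseteq> W \<and> length ys \<le> card W * N \<and> list_prod G ys = list_prod G xs"
proof (induct "length xs" arbitrary: xs rule: less_induct)
  case less
  show ?case
  proof (cases "length xs \<le> card W * N")
    case True
    then show ?thesis using less.prems by blast
  next
    case False
    have "\<exists>t\<in>W. N \<le> count_list xs t"
    proof (rule ccontr)
      assume "\<not> ?thesis"
      then have "sum (count_list xs) W \<le> sum (\<lambda>_. N) W"
        by (intro sum_mono) auto
      then show False using sum_count_set[OF less.prems W(3)] False by simp
    qed
    then obtain t where t: "t \<in> W" "N \<le> count_list xs t" by blast
    obtain ys where ys: "set ys \<subseteq> W" "length ys + count_list xs t = length xs"
        "list_prod G xs = t [^] count_list xs t \<otimes> list_prod G ys"
      using list_prod_collect[OF W(1,2) t(1) less.prems] by blast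
    define k where "k = count_list xs t - N"
    have tc: "t \<in> carrier G" using t W by auto
    have "t [^] count_list xs t = t [^] k \<otimes> t [^] N"
      using t tc by (simp add: nat_pow_mult k_def)
    then have "list_prod G xs = list_prod G (replicate k t @ ys)"
      using ys tc W N(2)[OF t(1)] by (subst list_prod_append) (auto simp: list_prod_replicate)
    moreover have "length (replicate k t @ ys) < length xs"
      using ys t N(1) unfolding k_def by simp
    moreover have "set (replicate k t @ ys) \<subseteq> W"
      using ys t by auto
    ultimately show ?thesis using less.hyps by metis
  qed
qed

lemma generate_subset_list_prods:
  fixes N :: nat
  assumes W: "W \<subseteq> carrier G" and N: "N > 0" "\<And>t. t \<in> W \<Longrightarrow> t [^] N = \<one>"
  shows "generate G W \<subseteq> list_prod G ` {xs. set xs \<subseteq> W}"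
proof
  fix x assume "x \<in> generate G W"
  then show "x \<in> list_prod G ` {xs. set xs \<subseteq> W}"
  proof (induct rule: generate.induct)
    case one
    show ?case by (rule image_eqI[of _ _ "[]"]) auto
  next
    case (incl h)
    then show ?case using W by (intro image_eqI[of _ _ "[h]"]) auto
  next
    case (inv h)
    have hc: "h \<in> carrier G" using inv W by auto
    have "h [^] (N - 1) \<otimes> h = \<one>" using N inv by (metis Suc_diff_1 nat_pow_Suc)
    then have "inv h = list_prod G (replicate (N - 1) h)"
      using hc by (simp add: list_prod_replicate inv_equality)
    then show ?case using inv by (intro image_eqI[of _ _ "replicate (N - 1) h"]) auto
  next
    case (eng h1 h2)
    then obtain xs ys where "set xs \<subseteq> W" "set ys \<subseteq> W" "h1 = list_prod G xs" "h2 = list_prod G ys"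
      by auto
    then show ?case using W by (intro image_eqI[of _ _ "xs @ ys"]) (auto simp: list_prod_append)
  qed
qed

theorem dietzmann_finite_generate:
  assumes "W \<subseteq> carrier G" "\<And>h x. h \<in> carrier G \<Longrightarrow> x \<in> W \<Longrightarrow> h \<otimes> x \<otimes> inv h \<in> W"
    and "finite W" and "\<And>t. t \<in> W \<Longrightarrow> \<exists>n::nat. n > 0 \<and> t [^] n = \<one>"
  shows "finite (generate G W)"
proof -
  obtain N :: nat where N: "N > 0" "\<And>t. t \<in> W \<Longrightarrow> t [^] N = \<one>"
    using common_exponent assms by metis
  have "generate G W \<subseteq> list_prod G ` {xs. set xs \<subseteq> W \<and> length xs \<le> card W * N}"
  proof
    fix x assume "x \<in> generate G W"
    then obtain xs where "set xs \<subseteq> W" "x = list_prod G xs"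
      using generate_subset_list_prods[OF assms(1) N] by blast
    then show "x \<in> list_prod G ` {xs. set xs \<subseteq> W \<and> length xs \<le> card W * N}"
      using list_prod_shorten[OF assms(1-3) N]
      by (metis (mono_tags, lifting) image_eqI mem_Collect_eq)
  qed
  moreover have "finite {xs. set xs \<subseteq> W \<and> length xs \<le> card W * N}"
    using finite_lists_length_le[OF assms(3)] by simp
  ultimately show ?thesis by (meson finite_imageI finite_subset)
qed

end

section \<open>The transfer into a central subgroup of finite index\<close>

lemma (in normal) nat_pow_card_rcosets_mem:
  assumes x: "x \<in> carrier G"
  shows "x [^] card (rcosets H) \<in> H"
proof -
  have "order (G Mod H) = card (rcosets H)"
    by (simp add: order_def FactGroup_def)
  then have "H #> x [^] card (rcosets H) = (H #> x) [^]\<^bsub>G Mod H\<^esub> order (G Mod H)"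
    using FactGroup_pow[OF x] by simp
  also have "\<dots> = H"
    using group.pow_order_eq_1[OF factorgroup_is_group, of "H #> x"] x
    by (simp add: carrier_FactGroup)
  finally show ?thesis using coset_join1[OF _ _ is_subgroup] x by blast
qed

definition coset_rep :: "'a set \<Rightarrow> 'a" where
  "coset_rep C = (SOME x. x \<in> C)"

definition transfer_factor :: "('a, 'b) monoid_scheme \<Rightarrow> 'a \<Rightarrow> 'a set \<Rightarrow> 'a" where
  "transfer_factor G x C = coset_rep C \<otimes>\<^bsub>G\<^esub> x \<otimes>\<^bsub>G\<^esub> inv\<^bsub>G\<^esub> coset_rep (C #>\<^bsub>G\<^esub> x)"

text \<open>The product is taken in \<open>H\<close>, so this is the transfer only when \<open>H\<close> is abelian.\<close>

definition transfer :: "('a, 'b) monoid_scheme \<Rightarrow> 'a set \<Rightarrow> 'a \<Rightarrow> 'a" where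
  "transfer G H x = finprod (G\<lparr>carrier := H\<rparr>) (transfer_factor G x) (rcosets\<^bsub>G\<^esub> H)"

locale central_finite_index = group +
  fixes Z
  assumes subgroup_Z: "subgroup Z G"
    and central: "\<And>z x. z \<in> Z \<Longrightarrow> x \<in> carrier G \<Longrightarrow> z \<otimes> x = x \<otimes> z"
    and finite_rcosets: "finite (rcosets Z)"
begin

lemma Z_subset_carrier: "Z \<subseteq> carrier G"
  using subgroup.subset[OF subgroup_Z] .

lemma normal_Z: "Z \<lhd> G"
  using subgroup_Z central Z_subset_carrier
  by (intro normalI) (auto simp: r_coset_def l_coset_def)

lemma comm_group_Z: "comm_group (G\<lparr>carrier := Z\<rparr>)"
proof (rule group.group_comm_groupI)
  show "group (G\<lparr>carrier := Z\<rparr>)" by (rule subgroup_imp_group[OF subgroup_Z])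
  show "x \<otimes>\<^bsub>G\<lparr>carrier := Z\<rparr>\<^esub> y = y \<otimes>\<^bsub>G\<lparr>carrier := Z\<rparr>\<^esub> x"
    if "x \<in> carrier (G\<lparr>carrier := Z\<rparr>)" "y \<in> carrier (G\<lparr>carrier := Z\<rparr>)" for x y
    using that central Z_subset_carrier by auto
qed

lemma coset_rep_mem: "C \<in> rcosets Z \<Longrightarrow> coset_rep C \<in> C"
  using subgroup.rcosets_non_empty[OF subgroup_Z] unfolding coset_rep_def by (simp add: some_in_eq)

lemma rcosets_subset_carrier: "C \<in> rcosets Z \<Longrightarrow> C \<subseteq> carrier G"
  using subgroup.rcosets_carrier[OF subgroup_Z is_group] .

lemma coset_rep_closed: "C \<in> rcosets Z \<Longrightarrow> coset_rep C \<in> carrier G"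
  using coset_rep_mem rcosets_subset_carrier by blast

lemma rcoset_mult_mem: "C \<in> rcosets Z \<Longrightarrow> x \<in> carrier G \<Longrightarrow> C #> x \<in> rcosets Z"
  by (auto simp: RCOSETS_def coset_mult_assoc Z_subset_carrier)

lemma rcoset_mult_inv: "C \<in> rcosets Z \<Longrightarrow> x \<in> carrier G \<Longrightarrow> C #> x #> inv x = C"
  using rcosets_subset_carrier by (simp add: coset_mult_assoc)

lemma bij_betw_rcoset_mult: "x \<in> carrier G \<Longrightarrow> bij_betw (\<lambda>C. C #> x) (rcosets Z) (rcosets Z)"
  by (rule bij_betw_byWitness[where f' = "\<lambda>C. C #> inv x"])
     (auto simp: rcoset_mult_mem rcoset_mult_inv simp del: inv_inv
           dest: rcoset_mult_inv[of _ "inv x", simplified])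

lemma rcoset_mult_central:
  assumes "C \<in> rcosets Z" "z \<in> Z"
  shows "C #> z = C"
proof -
  obtain a where a: "a \<in> carrier G" "C = Z #> a" using assms(1) unfolding RCOSETS_def by blast
  have z: "z \<in> carrier G" using assms(2) Z_subset_carrier by blast
  have "C #> z = Z #> (z \<otimes> a)"
    using a z central[OF assms(2) a(1)] Z_subset_carrier by (simp add: coset_mult_assoc)
  also have "\<dots> = C"
    using a z assms(2) Z_subset_carrier coset_join2[OF z subgroup_Z assms(2)]
    by (simp add: coset_mult_assoc[symmetric])
  finally show ?thesis .
qed

lemma same_rcoset_diff_mem:
  assumes "C \<in> rcosets Z" "p \<in> C" "q \<in> C"
  shows "p \<otimes> inv q \<in> Z"
proof -
  obtain a where a: "a \<in> carrier G" "C = Z #> a" using assms(1) unfolding RCOSETS_def by blast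
  have "Z #> q = C" using repr_independence[OF _ a(1) subgroup_Z] assms(3) a(2) by simp
  moreover have "q \<in> carrier G" using assms(1,3) rcosets_subset_carrier by blast
  ultimately show ?thesis
    using subgroup.rcos_module_imp[OF subgroup_Z is_group] assms(2) by blast
qed

lemma transfer_factor_mem:
  assumes "C \<in> rcosets Z" "x \<in> carrier G"
  shows "transfer_factor G x C \<in> Z"
  unfolding transfer_factor_def
proof (rule same_rcoset_diff_mem)
  show "C #> x \<in> rcosets Z" using assms by (rule rcoset_mult_mem)
  then show "coset_rep (C #> x) \<in> C #> x" by (rule coset_rep_mem)
  show "coset_rep C \<otimes> x \<in> C #> x"
    using coset_rep_mem[OF assms(1)] unfolding r_coset_def by blast
qed

lemma transfer_factor_mult:
  assumes C: "C \<in> rcosets Z" and x: "x \<in> carrier G" and y: "y \<in> carrier G"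
  shows "transfer_factor G (x \<otimes> y) C = transfer_factor G x C \<otimes> transfer_factor G y (C #> x)"
proof -
  have Cx: "C #> x \<in> rcosets Z" using rcoset_mult_mem[OF C x] .
  have reps: "coset_rep C \<in> carrier G" "coset_rep (C #> x) \<in> carrier G"
    "coset_rep (C #> x #> y) \<in> carrier G"
    using coset_rep_closed C Cx rcoset_mult_mem[OF Cx y] by blast+
  have "C #> (x \<otimes> y) = C #> x #> y"
    using coset_mult_assoc[OF rcosets_subset_carrier[OF C] x y] by simp
  then show ?thesis
    unfolding transfer_factor_def using reps x y by (simp add: m_assoc inv_mult_cancel_left)
qed

lemma transfer_factor_central:
  assumes "C \<in> rcosets Z" "z \<in> Z"
  shows "transfer_factor G z C = z"
proof -
  have r: "coset_rep C \<in> carrier G" using coset_rep_closed[OF assms(1)] .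
  then have "coset_rep C \<otimes> z = z \<otimes> coset_rep C" using central[OF assms(2)] by simp
  then show ?thesis
    unfolding transfer_factor_def
    using assms r Z_subset_carrier by (auto simp: rcoset_mult_central m_assoc)
qed

lemma transfer_mem: "x \<in> carrier G \<Longrightarrow> transfer G Z x \<in> Z"
proof -
  interpret Zg: comm_group "G\<lparr>carrier := Z\<rparr>" by (rule comm_group_Z)
  assume x: "x \<in> carrier G"
  have "transfer G Z x \<in> carrier (G\<lparr>carrier := Z\<rparr>)"
    unfolding transfer_def using transfer_factor_mem[OF _ x] by (intro Zg.finprod_closed) auto
  then show ?thesis by simp
qed

lemma transfer_mult:
  assumes x: "x \<in> carrier G" and y: "y \<in> carrier G"
  shows "transfer G Z (x \<otimes> y) = transfer G Z x \<otimes> transfer G Z y"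
proof -
  interpret Zg: comm_group "G\<lparr>carrier := Z\<rparr>" by (rule comm_group_Z)
  have factor_Pi: "transfer_factor G u \<in> rcosets Z \<rightarrow> carrier (G\<lparr>carrier := Z\<rparr>)"
    if "u \<in> carrier G" for u
    using transfer_factor_mem that by simp
  have shifted_Pi: "(\<lambda>C. transfer_factor G y (C #> x)) \<in> rcosets Z \<rightarrow> carrier (G\<lparr>carrier := Z\<rparr>)"
    using transfer_factor_mem rcoset_mult_mem x y by simp
  have "transfer G Z (x \<otimes> y) = finprod (G\<lparr>carrier := Z\<rparr>)
      (\<lambda>C. transfer_factor G x C \<otimes> transfer_factor G y (C #> x)) (rcosets Z)"
    unfolding transfer_def
  proof (rule Zg.finprod_cong')
    show "(\<lambda>C. transfer_factor G x C \<otimes> transfer_factor G y (C #> x))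
        \<in> rcosets Z \<rightarrow> carrier (G\<lparr>carrier := Z\<rparr>)"
      using transfer_factor_mem rcoset_mult_mem x y subgroup.m_closed[OF subgroup_Z] by simp
  qed (simp_all add: transfer_factor_mult x y)
  also have "\<dots> = transfer G Z x
      \<otimes> finprod (G\<lparr>carrier := Z\<rparr>) (\<lambda>C. transfer_factor G y (C #> x)) (rcosets Z)"
    using Zg.finprod_multf[OF factor_Pi[OF x] shifted_Pi] by (simp add: transfer_def)
  also have "finprod (G\<lparr>carrier := Z\<rparr>) (\<lambda>C. transfer_factor G y (C #> x)) (rcosets Z)
      = transfer G Z y"
  proof -
    have "(\<lambda>C. C #> x) ` (rcosets Z) = rcosets Z" "inj_on (\<lambda>C. C #> x) (rcosets Z)"
      using bij_betw_rcoset_mult[OF x] unfolding bij_betw_def by auto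
    then show ?thesis
      using Zg.finprod_reindex[of "transfer_factor G y" "\<lambda>C. C #> x" "rcosets Z"] factor_Pi[OF y]
      by (simp add: transfer_def)
  qed
  finally show ?thesis .
qed

lemma transfer_central: "z \<in> Z \<Longrightarrow> transfer G Z z = z [^] card (rcosets Z)"
proof -
  interpret Zg: comm_group "G\<lparr>carrier := Z\<rparr>" by (rule comm_group_Z)
  assume z: "z \<in> Z"
  have "transfer G Z z = finprod (G\<lparr>carrier := Z\<rparr>) (\<lambda>C. z) (rcosets Z)"
    unfolding transfer_def using z transfer_factor_central by (intro Zg.finprod_cong') auto
  also have "\<dots> = z [^] card (rcosets Z)"
    using Zg.finprod_const[of z "rcosets Z"] z nat_pow_consistent[of z _ Z] by simp
  finally show ?thesis .
qed

lemma transfer_one: "transfer G Z \<one> = \<one>"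
  using transfer_central[OF subgroup.one_closed[OF subgroup_Z]] by simp

lemma transfer_nat_pow: "x \<in> carrier G \<Longrightarrow> transfer G Z (x [^] (n::nat)) = transfer G Z x [^] n"
  by (induct n) (simp_all add: transfer_one transfer_mult)

lemma transfer_commutator:
  assumes x: "x \<in> carrier G" and y: "y \<in> carrier G"
  shows "transfer G Z (grp_commutator G x y) = \<one>"
proof -
  have cancel: "transfer G Z (inv u) \<otimes> transfer G Z u = \<one>" if "u \<in> carrier G" for u
    using transfer_mult[of "inv u" u] that by (simp add: transfer_one)
  have carrier: "transfer G Z u \<in> carrier G" if "u \<in> carrier G" for u
    using transfer_mem that Z_subset_carrier by blast
  have "transfer G Z (inv y) \<otimes> transfer G Z x = transfer G Z x \<otimes> transfer G Z (inv y)"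
    using central[OF transfer_mem carrier] x y by simp
  then have "transfer G Z (grp_commutator G x y)
      = (transfer G Z (inv x) \<otimes> transfer G Z x) \<otimes> (transfer G Z (inv y) \<otimes> transfer G Z y)"
    unfolding grp_commutator_def using x y carrier
    by (simp add: transfer_mult m_assoc[symmetric]) (simp add: m_assoc)
  then show ?thesis using cancel x y by simp
qed

theorem commutator_finite_order:
  assumes "x \<in> carrier G" "y \<in> carrier G"
  shows "\<exists>n::nat. n > 0 \<and> grp_commutator G x y [^] n = \<one>"
proof -
  define c where "c = grp_commutator G x y"
  define k where "k = card (rcosets Z)"
  have c: "c \<in> carrier G" using assms unfolding c_def grp_commutator_def by simp
  have "Z \<in> rcosets Z"
    using rcosetsI[OF Z_subset_carrier one_closed] Z_subset_carrier by simp
  then have "k > 0" using finite_rcosets unfolding k_def by (auto simp: card_gt_0_iff)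
  have "c [^] k \<in> Z"
    unfolding k_def using normal.nat_pow_card_rcosets_mem[OF normal_Z c] .
  then have "c [^] (k * k) = transfer G Z (c [^] k)"
    using transfer_central c by (simp add: k_def nat_pow_pow)
  also have "\<dots> = \<one>"
    using transfer_nat_pow[OF c] transfer_commutator[OF assms] by (simp add: c_def)
  finally show ?thesis using \<open>k > 0\<close> unfolding c_def by (intro exI[of _ "k * k"]) simp
qed

end

section \<open>Commutators of FC-elements\<close>

lemma finite_image_factor:
  assumes "finite (f ` A)" "\<And>x y. x \<in> A \<Longrightarrow> y \<in> A \<Longrightarrow> f x = f y \<Longrightarrow> g x = g y"
  shows "finite (g ` A)"
proof (rule finite_subset)
  show "g ` A \<subseteq> (\<lambda>b. g (inv_into A f b)) ` f ` A"
  proof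
    fix y assume "y \<in> g ` A"
    then obtain x where x: "x \<in> A" "y = g x" by blast
    then have "inv_into A f (f x) \<in> A" "f (inv_into A f (f x)) = f x"
      by (simp_all add: inv_into_into f_inv_into_f)
    then have "y = g (inv_into A f (f x))" using assms(2) x by metis
    then show "y \<in> (\<lambda>b. g (inv_into A f b)) ` f ` A" using x(1) by blast
  qed
  show "finite ((\<lambda>b. g (inv_into A f b)) ` f ` A)" using assms(1) by simp
qed

definition centralizer :: "('a, 'b) monoid_scheme \<Rightarrow> 'a set \<Rightarrow> 'a set" where
  "centralizer G S = {z \<in> carrier G. \<forall>s\<in>S. z \<otimes>\<^bsub>G\<^esub> s = s \<otimes>\<^bsub>G\<^esub> z}"

context group
begin

lemma subgroup_centralizer:
  assumes "S \<subseteq> carrier G"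
  shows "subgroup (centralizer G S) G"
proof (rule subgroupI)
  show "centralizer G S \<subseteq> carrier G" by (auto simp: centralizer_def)
  have "\<one> \<in> centralizer G S" using assms by (auto simp: centralizer_def)
  then show "centralizer G S \<noteq> {}" by blast
next
  fix z assume z: "z \<in> centralizer G S"
  have "inv z \<otimes> s = s \<otimes> inv z" if s: "s \<in> S" for s
  proof -
    have zs: "z \<in> carrier G" "s \<in> carrier G" "z \<otimes> s = s \<otimes> z"
      using z s assms by (auto simp: centralizer_def)
    have "s \<otimes> inv z = inv z \<otimes> (z \<otimes> s) \<otimes> inv z"
      using zs(1,2) by (simp add: inv_mult_cancel_left)
    also have "\<dots> = inv z \<otimes> s"
      using zs by (simp add: m_assoc)
    finally show ?thesis by simp
  qed
  then show "inv z \<in> centralizer G S" using z by (simp add: centralizer_def)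
next
  fix z w assume z: "z \<in> centralizer G S" and w: "w \<in> centralizer G S"
  have "z \<otimes> w \<otimes> s = s \<otimes> (z \<otimes> w)" if s: "s \<in> S" for s
  proof -
    have c: "z \<in> carrier G" "w \<in> carrier G" "s \<in> carrier G" "z \<otimes> s = s \<otimes> z" "w \<otimes> s = s \<otimes> w"
      using z w s assms by (auto simp: centralizer_def)
    have "z \<otimes> w \<otimes> s = z \<otimes> (s \<otimes> w)" using c by (simp add: m_assoc)
    also have "\<dots> = (s \<otimes> z) \<otimes> w" using c by (simp add: m_assoc[symmetric])
    finally show ?thesis using c by (simp add: m_assoc)
  qed
  then show "z \<otimes> w \<in> centralizer G S" using z w by (simp add: centralizer_def)
qed

lemma centralizer_generate:
  assumes "S \<subseteq> carrier G"
  shows "centralizer G S \<subseteq> centralizer G (generate G S)"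
proof
  fix z assume z: "z \<in> centralizer G S"
  then have "S \<subseteq> centralizer G {z}" using assms by (auto simp: centralizer_def)
  moreover have "subgroup (centralizer G {z}) G"
    using z by (intro subgroup_centralizer) (simp add: centralizer_def)
  ultimately have "generate G S \<subseteq> centralizer G {z}" by (rule generate_subgroup_incl)
  then show "z \<in> centralizer G (generate G S)"
    using z by (auto simp: centralizer_def)
qed

lemma finite_conjugation_actions:
  assumes "S \<subseteq> FC G" "finite S"
  shows "finite ((\<lambda>u. restrict (\<lambda>s. inv u \<otimes> s \<otimes> u) S) ` carrier G)"
proof (rule finite_subset)
  show "(\<lambda>u. restrict (\<lambda>s. inv u \<otimes> s \<otimes> u) S) ` carrier G \<subseteq> PiE S (conj_class G)"
  proof
    fix p assume "p \<in> (\<lambda>u. restrict (\<lambda>s. inv u \<otimes> s \<otimes> u) S) ` carrier G"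
    then obtain u where u: "u \<in> carrier G" "p = restrict (\<lambda>s. inv u \<otimes> s \<otimes> u) S" by blast
    have "inv u \<otimes> s \<otimes> u \<in> conj_class G s" if "s \<in> S" for s
      using u(1) unfolding conj_class_eq_image by (intro image_eqI[of _ _ "inv u"]) auto
    then show "p \<in> PiE S (conj_class G)" using u(2) by auto
  qed
  show "finite (PiE S (conj_class G))"
    using assms by (intro finite_PiE) (auto simp: FC_def)
qed

lemma finite_rcosets_centralizer:
  assumes L: "subgroup L G" and S: "S \<subseteq> L" "S \<subseteq> FC G" "finite S"
  shows "finite (rcosets\<^bsub>G\<lparr>carrier := L\<rparr>\<^esub> (L \<inter> centralizer G S))"
proof -
  define Z where "Z = L \<inter> centralizer G S"
  have SC: "S \<subseteq> carrier G" using S(2) unfolding FC_def by blast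
  have Z: "subgroup Z G"
    unfolding Z_def using subgroups_Inter_pair[OF L subgroup_centralizer[OF SC]] .
  have LC: "L \<subseteq> carrier G" using subgroup.subset[OF L] .
  define f where "f u = restrict (\<lambda>s. inv u \<otimes> s \<otimes> u) S" for u
  \<comment> \<open>the coset \<open>Z #> u\<close> is determined by how \<open>u\<close> conjugates \<open>S\<close>\<close>
  have "finite ((\<lambda>u. Z #> u) ` L)"
  proof (rule finite_image_factor)
    have "f ` L \<subseteq> (\<lambda>u. restrict (\<lambda>s. inv u \<otimes> s \<otimes> u) S) ` carrier G"
      unfolding f_def by (rule image_mono[OF LC])
    then show "finite (f ` L)"
      by (rule finite_subset[OF _ finite_conjugation_actions[OF S(2,3)]])
  next
    fix u v assume u: "u \<in> L" and v: "v \<in> L" and uv: "f u = f v"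
    have uvC: "u \<in> carrier G" "v \<in> carrier G" using u v LC by auto
    have "u \<otimes> inv v \<otimes> s = s \<otimes> (u \<otimes> inv v)" if s: "s \<in> S" for s
    proof (rule mult_inv_commute_if_conj_eq[OF uvC])
      show "s \<in> carrier G" using s SC by blast
      have "f u s = f v s" using uv by simp
      then show "inv u \<otimes> s \<otimes> u = inv v \<otimes> s \<otimes> v" using s by (simp add: f_def)
    qed
    then have "u \<otimes> inv v \<in> Z"
      unfolding Z_def centralizer_def
      using subgroup.m_closed[OF L u subgroup.m_inv_closed[OF L v]] uvC by simp
    then have "u \<in> Z #> v" using subgroup.rcos_module_rev[OF Z is_group] uvC by blast
    then show "Z #> u = Z #> v" using repr_independence[OF _ uvC(2) Z] by simp
  qed
  moreover have "rcosets\<^bsub>G\<lparr>carrier := L\<rparr>\<^esub> Z = (\<lambda>u. Z #> u) ` L"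
    unfolding RCOSETS_def by (simp add: UNION_singleton_eq_range)
  ultimately show ?thesis unfolding Z_def by simp
qed

theorem FC_commutator_finite_order:
  assumes "a \<in> FC G" "b \<in> FC G"
  shows "\<exists>n::nat. n > 0 \<and> grp_commutator G a b [^] n = \<one>"
proof -
  have ab: "{a, b} \<subseteq> carrier G" using assms unfolding FC_def by blast
  define L where "L = generate G {a, b}"
  have L: "subgroup L G" unfolding L_def using generate_is_subgroup[OF ab] .
  have abL: "a \<in> L" "b \<in> L" unfolding L_def by (auto intro: generate.incl)
  define Z where "Z = L \<inter> centralizer G {a, b}"
  interpret H: central_finite_index "G\<lparr>carrier := L\<rparr>" Z
  proof (intro central_finite_index.intro central_finite_index_axioms.intro)
    show "group (G\<lparr>carrier := L\<rparr>)" by (rule subgroup_imp_group[OF L])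
    show "subgroup Z (G\<lparr>carrier := L\<rparr>)"
      unfolding Z_def using subgroup_incl[OF subgroups_Inter_pair[OF L subgroup_centralizer[OF ab]] L]
      by simp
    show "finite (rcosets\<^bsub>G\<lparr>carrier := L\<rparr>\<^esub> Z)"
      unfolding Z_def using finite_rcosets_centralizer[OF L] abL assms by simp
    fix z x assume z: "z \<in> Z" and x: "x \<in> carrier (G\<lparr>carrier := L\<rparr>)"
    have "z \<in> centralizer G L"
      using centralizer_generate[OF ab] z unfolding Z_def L_def by blast
    then show "z \<otimes>\<^bsub>G\<lparr>carrier := L\<rparr>\<^esub> x = x \<otimes>\<^bsub>G\<lparr>carrier := L\<rparr>\<^esub> z"
      using x by (simp add: centralizer_def)
  qed
  obtain n :: nat where "n > 0"
    "grp_commutator (G\<lparr>carrier := L\<rparr>) a b [^]\<^bsub>G\<lparr>carrier := L\<rparr>\<^esub> n = \<one>"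
    using H.commutator_finite_order abL by auto
  moreover have "grp_commutator (G\<lparr>carrier := L\<rparr>) a b = grp_commutator G a b"
    using L abL by (simp add: grp_commutator_def)
  ultimately show ?thesis by (metis nat_pow_consistent)
qed

end

section \<open>Finite closed subgroups of topological groups\<close>

lemma continuous_map_group_mult:
  assumes "topological_group G T" "continuous_map U T f" "continuous_map U T g"
  shows "continuous_map U T (\<lambda>x. f x \<otimes>\<^bsub>G\<^esub> (g x))"
proof -
  have "continuous_map (prod_topology T T) T (\<lambda>(x, y). x \<otimes>\<^bsub>G\<^esub> y)"
    using assms(1) unfolding topological_group_def by blast
  then have "continuous_map U T ((\<lambda>(x, y). x \<otimes>\<^bsub>G\<^esub> y) \<circ> (\<lambda>x. (f x, g x)))"
    using continuous_map_pairedI[OF assms(2,3)] by (intro continuous_map_compose)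
  then show ?thesis by (simp add: o_def)
qed

lemma continuous_map_group_inv:
  assumes "topological_group G T" "continuous_map U T f"
  shows "continuous_map U T (\<lambda>x. inv\<^bsub>G\<^esub> (f x))"
proof -
  have "continuous_map T T (\<lambda>x. inv\<^bsub>G\<^esub> x)"
    using assms(1) unfolding topological_group_def by blast
  then show ?thesis using continuous_map_compose[OF assms(2)] by (simp add: o_def)
qed

lemma continuous_map_commutator_left:
  assumes "topological_group G T" "g \<in> carrier G"
  shows "continuous_map T T (\<lambda>x. grp_commutator G x g)"
proof -
  have "topspace T = carrier G" using assms(1) unfolding topological_group_def by blast
  then have "continuous_map T T (\<lambda>x. c)" if "c \<in> carrier G" for c
    using that by simp
  moreover have "group G" using assms(1) unfolding topological_group_def by blast
  ultimately show ?thesis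
    unfolding grp_commutator_def using assms
    by (intro continuous_map_group_mult continuous_map_group_inv continuous_map_id[unfolded id_def])
       (auto intro: group.inv_closed)
qed

lemma continuous_map_finite_image_dense:
  assumes f: "continuous_map U V f" and "t1_space V" "finite (f ` topspace U)"
    and "U closure_of D = topspace U" "x \<in> topspace U"
  obtains d where "d \<in> D" "f d = f x"
proof -
  \<comment> \<open>the fibre of \<open>f x\<close> is open, being the complement of finitely many closed fibres\<close>
  define F where "F = topspace U - {y \<in> topspace U. f y \<in> f ` topspace U - {f x}}"
  have "f ` topspace U \<subseteq> topspace V" using continuous_map_image_subset_topspace[OF f] .
  then have "closedin V (f ` topspace U - {f x})"
    using assms(2,3) t1_space_closedin_finite by (metis Diff_subset finite_Diff order_trans)
  then have "openin U F"
    unfolding F_def by (intro openin_diff closedin_continuous_map_preimage[OF f]) auto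
  moreover have "x \<in> F" unfolding F_def using assms(5) by simp
  ultimately obtain d where "d \<in> D" "d \<in> F"
    using assms(4,5) unfolding in_closure_of[symmetric] by (metis in_closure_of)
  then show ?thesis using that unfolding F_def by blast
qed

context group
begin

lemma top_generate_subset_generate:
  assumes "t1_space T" "topspace T = carrier G" "Y \<subseteq> carrier G" "finite (generate G Y)"
  shows "top_generate G T Y \<subseteq> generate G Y"
  unfolding top_generate_def
proof (rule Inter_lower, intro CollectI conjI)
  show "subgroup (generate G Y) G" using generate_is_subgroup[OF assms(3)] .
  then show "closedin T (generate G Y)"
    using assms t1_space_closedin_finite subgroup.subset by metis
  show "Y \<subseteq> generate G Y" by (auto intro: generate.incl)
qed

lemma finite_top_generate_torsion_conj_closed:
  assumes "t1_space T" "topspace T = carrier G"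
    and "W \<subseteq> carrier G" "\<And>h x. h \<in> carrier G \<Longrightarrow> x \<in> W \<Longrightarrow> h \<otimes> x \<otimes> inv h \<in> W"
    and "finite W" "\<And>t. t \<in> W \<Longrightarrow> \<exists>n::nat. n > 0 \<and> t [^] n = \<one>"
    and "Y \<subseteq> W"
  shows "finite (top_generate G T Y)"
proof -
  have "finite (generate G Y)"
    using dietzmann_finite_generate[OF assms(3-6)] mono_generate[OF assms(7)] finite_subset by blast
  then show ?thesis
    using top_generate_subset_generate assms finite_subset by (metis order_trans)
qed

lemma FC_dense_commutator_finite_order:
  assumes "topological_group G T" "t1_space T" "T closure_of FC G = topspace T"
    and "g \<in> FC G" "x \<in> carrier G"
  shows "\<exists>n::nat. n > 0 \<and> grp_commutator G x g [^] n = \<one>"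
proof -
  have top: "topspace T = carrier G" using assms(1) unfolding topological_group_def by blast
  have g: "g \<in> carrier G" using assms(4) unfolding FC_def by blast
  obtain y where "y \<in> FC G" "grp_commutator G y g = grp_commutator G x g"
    using continuous_map_finite_image_dense[OF continuous_map_commutator_left[OF assms(1) g] assms(2)
        _ assms(3)] commutators_finite[OF assms(4)] assms(5) top by metis
  then show ?thesis using FC_commutator_finite_order[OF _ assms(4)] by metis
qed

theorem finite_top_commutator_FC:
  assumes tg: "topological_group G T" and t1: "t1_space T"
    and dense: "T closure_of FC G = topspace T" and g: "g \<in> FC G"
  shows "finite (top_commutator G T (carrier G) {g})"
proof -
  have top: "topspace T = carrier G" using tg unfolding topological_group_def by blast
  have gC: "g \<in> carrier G" and fin: "finite (conj_class G g)" using g unfolding FC_def by auto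
  have kC: "k \<in> carrier G" if "k \<in> conj_class G g" for k
    using conj_class_subset_carrier[OF gC] that by blast
  \<comment> \<open>commutators with all conjugates of \<open>g\<close>, to make the set conjugation-invariant\<close>
  define W where "W = (\<Union>k\<in>conj_class G g. (\<lambda>x. grp_commutator G x k) ` carrier G)"
  have W_carrier: "W \<subseteq> carrier G"
    unfolding W_def grp_commutator_def using kC by auto
  have W_conj: "h \<otimes> w \<otimes> inv h \<in> W" if h: "h \<in> carrier G" and w: "w \<in> W" for h w
  proof -
    from w obtain x k where xk: "k \<in> conj_class G g" "x \<in> carrier G" "w = grp_commutator G x k"
      unfolding W_def by (auto elim!: imageE)
    then have "h \<otimes> w \<otimes> inv h = grp_commutator G (h \<otimes> x \<otimes> inv h) (h \<otimes> k \<otimes> inv h)"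
      using conj_commutator[OF h xk(2) kC[OF xk(1)]] by simp
    moreover have "h \<otimes> x \<otimes> inv h \<in> carrier G" using h xk(2) by simp
    moreover have "h \<otimes> k \<otimes> inv h \<in> conj_class G g" using conj_mem_conj_class[OF gC h xk(1)] .
    ultimately show ?thesis unfolding W_def by blast
  qed
  have W_finite: "finite W"
    unfolding W_def using fin commutators_finite[OF FC_conj_class[OF g]] by blast
  have W_torsion: "\<exists>n::nat. n > 0 \<and> w [^] n = \<one>" if "w \<in> W" for w
  proof -
    from that obtain x k where "k \<in> conj_class G g" "x \<in> carrier G" "w = grp_commutator G x k"
      unfolding W_def by (auto elim!: imageE)
    then show ?thesis
      using FC_dense_commutator_finite_order[OF tg t1 dense FC_conj_class[OF g]] by blast
  qed
  have "{grp_commutator G x y | x y. x \<in> carrier G \<and> y \<in> {g}} \<subseteq> W"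
    unfolding W_def using mem_conj_class_self[OF gC] by blast
  from finite_top_generate_torsion_conj_closed[OF t1 top W_carrier W_conj W_finite W_torsion this]
  show ?thesis unfolding top_commutator_def .
qed

theorem finite_top_generate_conj_class:
  assumes t1: "t1_space T" and top: "topspace T = carrier G"
    and g: "g \<in> FC G" and tor: "\<exists>n::nat. n > 0 \<and> g [^] n = \<one>"
  shows "finite (top_generate G T (conj_class G g))"
proof -
  have gC: "g \<in> carrier G" and fin: "finite (conj_class G g)" using g unfolding FC_def by auto
  obtain n :: nat where n: "n > 0" "g [^] n = \<one>" using tor by blast
  have conj_torsion: "\<exists>n::nat. n > 0 \<and> k [^] n = \<one>" if "k \<in> conj_class G g" for k
  proof -
    from that obtain h where h: "h \<in> carrier G" "k = h \<otimes> g \<otimes> inv h"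
      unfolding conj_class_eq_image by (auto elim!: imageE)
    have "k [^] n = h \<otimes> g [^] n \<otimes> inv h" unfolding h(2) by (rule conj_nat_pow[OF h(1) gC])
    also have "\<dots> = \<one>" using h(1) n(2) by simp
    finally show ?thesis using n(1) by blast
  qed
  show ?thesis
    by (rule finite_top_generate_torsion_conj_closed[OF t1 top conj_class_subset_carrier[OF gC]
        conj_mem_conj_class[OF gC] fin conj_torsion subset_refl])
qed

end

theorem lemma2p2:
  fixes G :: "('a, 'b) monoid_scheme" and T :: "'a topology"
  assumes "profinite_group G T"
    and "T closure_of (FC G) = topspace T"
  shows "(\<forall>g \<in> FC G. finite (top_commutator G T (carrier G) {g}))
       \<and> (\<forall>g \<in> FC G. (\<exists>n::nat. n > 0 \<and> g [^]\<^bsub>G\<^esub> n = \<one>\<^bsub>G\<^esub>)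
              \<longrightarrow> finite (top_generate G T (conj_class G g)))"
proof -
  have tg: "topological_group G T" and t1: "t1_space T"
    using assms(1) Hausdorff_imp_t1_space unfolding profinite_group_def by blast+
  then have grp: "group G" and top: "topspace T = carrier G"
    unfolding topological_group_def by blast+
  show ?thesis
  proof (intro conjI ballI impI)
    fix g assume "g \<in> FC G"
    then show "finite (top_commutator G T (carrier G) {g})"
      by (rule group.finite_top_commutator_FC[OF grp tg t1 assms(2)])
  next
    fix g assume "g \<in> FC G" "\<exists>n::nat. n > 0 \<and> g [^]\<^bsub>G\<^esub> n = \<one>\<^bsub>G\<^esub>"
    then show "finite (top_generate G T (conj_class G g))"
      by (rule group.finite_top_generate_conj_class[OF grp t1 top])
  qed
qed

end
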